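(* Let $a,b,u$ be positive integers. In coordinates $(i,j)$ with $i$ the row index (increasing downward, so "north" means decreasing $i$) and $j$ the column index (increasing eastward), a path means a lattice path with unit steps going east $(0,1)$ or north $(-1,0)$ from its SW endpoint to its NE endpoint, paths are nonintersecting if they share no vertex, and a diagonal chain of size $s$ is a set $\{(i_1,j_1),\dots,(i_s,j_s)\}$ with $i_1<\dots<i_s$ and $j_1<\dots<j_s$. (i) Assume $u\le\min(a,b)$. Let $X_p=(a-u+p,p)$ and $Y_p=(p,b-u+p)$ for $1\le p\le u$, let $R_{\rm hex}\subseteq\mathbb{R}^2$ be the closed hexagon with vertices $(1,1),X_1,X_u,(a,b),Y_u,Y_1$, and let $C\subseteq R_{\rm hex}\cap\mathbb{Z}^2$. Then there exists a collection of $u$ nonintersecting paths $H_1,\dots,H_u$, $H_p$ with endpoints $X_p$ and $Y_p$, whose union contains $C$, if and only if all diagonal chains in $C$ have size $\le u$. For (ii) and (ii') assume $C\subseteq([1,a]\times[1,b])\cap\mathbb{Z}^2$. (ii) If $u<a$, then there exists a collection of $u$ nonintersecting paths, the $p$-th with endpoints $(a-u+p,1)$ and $(p,b)$ ($1\le p\le u$), whose union contains $C$, if and only if $u\le b$ and all diagonal chains of $C$ have size $\le u$. If $u=a$, then (regardless of $b$) there exists a unique collection of $u$ nonintersecting paths, the $p$-th with endpoints $(a-u+p,1)$ and $(p,b)$, whose union contains $C$, and each of these paths is straight horizontal. (ii') If $u<b$, then there exists a collection of $u$ nonintersecting paths, the $q$-th with endpoints $(1,b-u+q)$ and $(a,q)$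 ($1\le q\le u$), whose union contains $C$, if and only if $u\le a$ and all diagonal chains of $C$ have size $\le u$. If $u=b$, then (regardless of $a$) there exists a unique collection of $u$ nonintersecting paths, the $q$-th with endpoints $(1,b-u+q)$ and $(a,q)$, whose union contains $C$, and each of these paths is straight vertical.
   Context: A path is straight horizontal if it contains no vertical edge and straight vertical if it contains no horizontal edge. All paths are in the lattice $\mathbb{Z}^2$ (for (ii), (ii') inside the grid $[1,a]\times[1,b]$). *)

theory Defs
  imports "HOL-Analysis.Analysis"
begin

text \<open>Points are (i,j) with i the row index (north = decreasing i), j the column index
  (east = increasing j).\<close>

definition lpath :: "(int \<times> int) list \<Rightarrow> bool" where
  "lpath P \<longleftrightarrow> P \<noteq> [] \<and>
     (\<forall>k. Suc k < length P \<longrightarrow>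
        (fst (P ! Suc k) = fst (P ! k) \<and> snd (P ! Suc k) = snd (P ! k) + 1) \<or>
        (fst (P ! Suc k) = fst (P ! k) - 1 \<and> snd (P ! Suc k) = snd (P ! k)))"

definition path_from_to :: "(int \<times> int) list \<Rightarrow> int \<times> int \<Rightarrow> int \<times> int \<Rightarrow> bool" where
  "path_from_to P s t \<longleftrightarrow> lpath P \<and> hd P = s \<and> last P = t"

definition straight_horizontal :: "(int \<times> int) list \<Rightarrow> bool" where
  "straight_horizontal P \<longleftrightarrow> (\<forall>k. Suc k < length P \<longrightarrow> fst (P ! Suc k) = fst (P ! k))"

definition straight_vertical :: "(int \<times> int) list \<Rightarrow> bool" where
  "straight_vertical P \<longleftrightarrow> (\<forall>k. Suc k < length P \<longrightarrow> snd (P ! Suc k) = snd (P ! k))"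

definition diag_chain :: "(int \<times> int) set \<Rightarrow> bool" where
  "diag_chain D \<longleftrightarrow> (\<forall>x\<in>D. \<forall>y\<in>D. x \<noteq> y \<longrightarrow>
      (fst x < fst y \<and> snd x < snd y) \<or> (fst y < fst x \<and> snd y < snd x))"

definition chains_bounded :: "(int \<times> int) set \<Rightarrow> nat \<Rightarrow> bool" where
  "chains_bounded C u \<longleftrightarrow> (\<forall>D. D \<subseteq> C \<longrightarrow> diag_chain D \<longrightarrow> card D \<le> u)"

definition good_family ::
  "nat \<Rightarrow> (nat \<Rightarrow> int \<times> int) \<Rightarrow> (nat \<Rightarrow> int \<times> int) \<Rightarrow> (int \<times> int) set
     \<Rightarrow> (nat \<Rightarrow> (int \<times> int) list) \<Rightarrow> bool" where
  "good_family u X Y C H \<longleftrightarrow>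
     (\<forall>p\<in>{1..u}. path_from_to (H p) (X p) (Y p)) \<and>
     (\<forall>p\<in>{1..u}. \<forall>q\<in>{1..u}. p \<noteq> q \<longrightarrow> set (H p) \<inter> set (H q) = {}) \<and>
     C \<subseteq> (\<Union>p\<in>{1..u}. set (H p))"

definition rpt :: "int \<times> int \<Rightarrow> real \<times> real" where
  "rpt x = (real_of_int (fst x), real_of_int (snd x))"

end

theory Submission
  imports Defs
begin

text \<open>Along a path the row index weakly decreases and the column index weakly increases, so a path
  meets a diagonal chain at most once; a covering family of \<open>u\<close> paths therefore bounds every chain
  by \<open>u\<close>. Conversely, let \<open>L z\<close> be the larger of the size of the longest diagonal chain of \<open>C\<close>
  weakly north-west of \<open>z\<close> and the level \<open>f z\<close> of \<open>z\<close> with respect to the south-easternmost family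
  with the prescribed endpoints. Then \<open>L\<close> is monotone, grows by at most one along a diagonal step
  and jumps at every point of \<open>C\<close>. Hence the north-west frontiers of the level sets
  \<open>{z. p \<le> L z}\<close> form nonintersecting paths from \<open>X p\<close> to \<open>Y p\<close>, and each \<open>c \<in> C\<close> lies on the
  frontier of level \<open>L c\<close>.

  In (ii) with \<open>u < a\<close> the sources are stacked in the first column, which forces the lowest path to
  start with \<open>u - 1\<close> east steps, so \<open>u \<le> b\<close>; for \<open>u = a\<close> every path joins two points of one row.
  Part (ii') is part (ii) reflected in the anti-diagonal.\<close>

section \<open>Lattice paths\<close>

lemma lpath_step:
  assumes "lpath P" "Suc k < length P"
  shows "P ! Suc k = (fst (P ! k), snd (P ! k) + 1) \<or> P ! Suc k = (fst (P ! k) - 1, snd (P ! k))"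
  using assms unfolding lpath_def by (auto simp: prod_eq_iff)

lemma lpath_Cons:
  assumes "lpath P" "hd P = (fst x, snd x + 1) \<or> hd P = (fst x - 1, snd x)"
  shows "lpath (x # P)"
  using assms unfolding lpath_def by (auto simp: nth_Cons hd_conv_nth split: nat.split)

lemma lpath_nth_mono:
  assumes "lpath P" "j \<le> k" "k < length P"
  shows "fst (P ! k) \<le> fst (P ! j) \<and> snd (P ! j) \<le> snd (P ! k)"
  using assms(2,3)
proof (induction k)
  case (Suc k)
  then show ?case using lpath_step[OF assms(1) Suc.prems(2)] by (cases "j = Suc k") auto
qed simp

lemma lpath_nth_dist:
  assumes "lpath P" "k < length P"
  shows "fst (P ! 0) - fst (P ! k) + (snd (P ! k) - snd (P ! 0)) = int k"
  using assms(2)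
proof (induction k)
  case (Suc k)
  then show ?case using lpath_step[OF assms(1) Suc.prems] by auto
qed simp

lemma lpath_length:
  assumes "lpath P"
  shows "int (length P) = fst (hd P) - fst (last P) + (snd (last P) - snd (hd P)) + 1"
proof -
  have "P \<noteq> []" using assms by (simp add: lpath_def)
  then show ?thesis
    using lpath_nth_dist[OF assms, of "length P - 1"]
    by (simp add: hd_conv_nth last_conv_nth of_nat_diff Suc_le_eq)
qed

lemma lpath_set_bounds:
  assumes "lpath P" "z \<in> set P"
  shows "fst (last P) \<le> fst z \<and> fst z \<le> fst (hd P) \<and> snd (hd P) \<le> snd z \<and> snd z \<le> snd (last P)"
proof -
  obtain k where k: "k < length P" "z = P ! k" using assms(2) by (auto simp: in_set_conv_nth)
  then have "P \<noteq> []" by auto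
  then show ?thesis
    using k lpath_nth_mono[OF assms(1), of 0 k] lpath_nth_mono[OF assms(1), of k "length P - 1"]
    by (simp add: hd_conv_nth last_conv_nth)
qed

lemma lpath_no_diagonal_pair:
  assumes "lpath P" "x \<in> set P" "y \<in> set P"
  shows "\<not> (fst x < fst y \<and> snd x < snd y)"
proof -
  obtain j k where "j < length P" "x = P ! j" "k < length P" "y = P ! k"
    using assms(2,3) by (auto simp: in_set_conv_nth)
  then show ?thesis using lpath_nth_mono[OF assms(1), of j k] lpath_nth_mono[OF assms(1), of k j]
    by (cases "j \<le> k") auto
qed

lemma straight_horizontal_row: "straight_horizontal (map (\<lambda>k. (r, f k)) xs)"
  by (simp add: straight_horizontal_def)

lemma straight_vertical_column: "straight_vertical (map (\<lambda>k. (f k, c)) xs)"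
  by (simp add: straight_vertical_def)

lemma path_from_to_same_row:
  assumes "path_from_to P (r, c) (r, d)"
  shows "P = map (\<lambda>k. (r, c + int k)) [0..<nat (d - c + 1)]"
proof -
  have lp: "lpath P" and hd: "hd P = (r, c)" and last: "last P = (r, d)"
    using assms by (auto simp: path_from_to_def)
  then have ne: "P \<noteq> []" by (simp add: lpath_def)
  have len: "length P = nat (d - c + 1)" using lpath_length[OF lp] hd last by simp
  have "P ! k = (r, c + int k)" if "k < length P" for k
  proof -
    have "fst (P ! k) = r" using lpath_set_bounds[OF lp nth_mem[OF that]] hd last by simp
    then show ?thesis using lpath_nth_dist[OF lp that] hd ne by (simp add: hd_conv_nth prod_eq_iff)
  qed
  then show ?thesis using len by (intro nth_equalityI) auto
qed

section \<open>Diagonal chains and the chain rank\<close>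

lemma good_family_chains_bounded:
  assumes "good_family u X Y C H"
  shows "chains_bounded C u"
  unfolding chains_bounded_def
proof (intro allI impI)
  fix D assume D: "D \<subseteq> C" "diag_chain D"
  then have "\<forall>d\<in>D. \<exists>p\<in>{1..u}. d \<in> set (H p)"
    using assms unfolding good_family_def by blast
  then obtain g where g: "\<And>d. d \<in> D \<Longrightarrow> g d \<in> {1..u} \<and> d \<in> set (H (g d))"
    by metis
  have "inj_on g D"
  proof (rule inj_onI, rule ccontr)
    fix d e assume de: "d \<in> D" "e \<in> D" "g d = g e" "d \<noteq> e"
    have "lpath (H (g d))" using assms g[OF de(1)] by (auto simp: good_family_def path_from_to_def)
    moreover have "(fst d < fst e \<and> snd d < snd e) \<or> (fst e < fst d \<and> snd e < snd d)"
      using D(2) de unfolding diag_chain_def by blast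
    ultimately show False
      using g[OF de(1)] g[OF de(2)] de(3) lpath_no_diagonal_pair by metis
  qed
  then have "card D \<le> card {1..u}" using g by (intro card_inj_on_le) auto
  then show "card D \<le> u" by simp
qed

lemma diag_chain_inj_on_fst: "diag_chain D \<Longrightarrow> inj_on fst D"
  unfolding diag_chain_def inj_on_def by fastforce

lemma diag_chain_inj_on_snd: "diag_chain D \<Longrightarrow> inj_on snd D"
  unfolding diag_chain_def inj_on_def by fastforce

lemma diag_chain_insert:
  assumes "diag_chain D" "\<And>x. x \<in> D \<Longrightarrow> fst x < fst c \<and> snd x < snd c"
  shows "diag_chain (insert c D)"
  using assms unfolding diag_chain_def by auto

lemma diag_chain_card_le_fst:
  assumes "diag_chain D" "fst ` D \<subseteq> {1..n}"
  shows "int (card D) \<le> max 0 n"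
proof -
  have "card D = card (fst ` D)" using assms(1) by (simp add: card_image diag_chain_inj_on_fst)
  also have "\<dots> \<le> card {1..n}" using assms(2) by (intro card_mono) auto
  finally show ?thesis by simp
qed

lemma diag_chain_card_le_snd:
  assumes "diag_chain D" "snd ` D \<subseteq> {1..n}"
  shows "int (card D) \<le> max 0 n"
proof -
  have "card D = card (snd ` D)" using assms(1) by (simp add: card_image diag_chain_inj_on_snd)
  also have "\<dots> \<le> card {1..n}" using assms(2) by (intro card_mono) auto
  finally show ?thesis by simp
qed

lemma chains_bounded_rows:
  assumes "C \<subseteq> {1..int a} \<times> UNIV"
  shows "chains_bounded C a"
  unfolding chains_bounded_def
proof (intro allI impI)
  fix D assume "D \<subseteq> C" "diag_chain D"
  then have "int (card D) \<le> max 0 (int a)" using assms by (intro diag_chain_card_le_fst) auto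
  then show "card D \<le> a" by simp
qed

text \<open>Pairs are ordered componentwise: \<open>{..z}\<close> is the closed quadrant north-west of \<open>z\<close>, and
  \<open>{(fst t, snd s)..(fst s, snd t)}\<close> is the rectangle with south-west corner \<open>s\<close> and north-east
  corner \<open>t\<close>.\<close>

definition chain_rank :: "(int \<times> int) set \<Rightarrow> int \<times> int \<Rightarrow> nat" where
  "chain_rank C z = Max (card ` {D. D \<subseteq> C \<inter> {..z} \<and> diag_chain D})"

lemma finite_chains_below:
  assumes "finite C"
  shows "finite {D. D \<subseteq> C \<inter> {..z} \<and> diag_chain D}"
  by (rule finite_subset[of _ "Pow C"]) (use assms in auto)

lemma chain_rank_ge:
  assumes "finite C" "D \<subseteq> C \<inter> {..z}" "diag_chain D"
  shows "card D \<le> chain_rank C z"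
  unfolding chain_rank_def using assms finite_chains_below[OF assms(1)] by (intro Max_ge) auto

lemma chain_rank_attained:
  assumes "finite C"
  obtains D where "D \<subseteq> C \<inter> {..z}" "diag_chain D" "card D = chain_rank C z"
proof -
  have "diag_chain {}" by (simp add: diag_chain_def)
  then have "chain_rank C z \<in> card ` {D. D \<subseteq> C \<inter> {..z} \<and> diag_chain D}"
    unfolding chain_rank_def using finite_chains_below[OF assms] by (intro Max_in) auto
  then show thesis using that by auto
qed

lemma chain_rank_mono:
  assumes "finite C" "z \<le> w"
  shows "chain_rank C z \<le> chain_rank C w"
proof -
  obtain D where "D \<subseteq> C \<inter> {..z}" "diag_chain D" "card D = chain_rank C z"
    using chain_rank_attained[OF assms(1)] .
  moreover have "{..z} \<subseteq> {..w}" using assms(2) by simp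
  ultimately have "D \<subseteq> C \<inter> {..w}" by (meson Int_mono order_refl subset_trans)
  then show ?thesis using chain_rank_ge[OF assms(1), of D w] \<open>diag_chain D\<close> \<open>card D = chain_rank C z\<close>
    by simp
qed

lemma chain_rank_diag_step:
  assumes "finite C"
  shows "chain_rank C z \<le> chain_rank C (z - (1, 1)) + 1"
proof -
  obtain D where D: "D \<subseteq> C \<inter> {..z}" "diag_chain D" "card D = chain_rank C z"
    using chain_rank_attained[OF assms] .
  have fin: "finite D" using D(1) assms by (auto intro: finite_subset)
  let ?Q = "{..z - (1, 1)}"
  have "D \<inter> ?Q \<subseteq> C \<inter> ?Q" "diag_chain (D \<inter> ?Q)"
    using D(1,2) unfolding diag_chain_def by auto
  then have "card (D \<inter> ?Q) \<le> chain_rank C (z - (1, 1))" using chain_rank_ge[OF assms] by blast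
  moreover have "card (D - ?Q) \<le> 1"
  proof -
    \<comment> \<open>of two chain elements in the quadrant of \<open>z\<close>, the smaller one lies in that of \<open>z - (1, 1)\<close>\<close>
    have "x = y" if xy: "x \<in> D - ?Q" "y \<in> D - ?Q" for x y
    proof (rule ccontr)
      assume "x \<noteq> y"
      then have "(fst x < fst y \<and> snd x < snd y) \<or> (fst y < fst x \<and> snd y < snd x)"
        using D(2) xy unfolding diag_chain_def by blast
      moreover have "x \<le> z" "y \<le> z" "\<not> x \<le> z - (1, 1)" "\<not> y \<le> z - (1, 1)"
        using xy D(1) by auto
      ultimately show False by (auto simp: less_eq_prod_def)
    qed
    then show ?thesis using fin by (simp add: card_le_Suc0_iff_eq)
  qed
  ultimately show ?thesis using D(3) card_Int_Diff[OF fin, of ?Q] by linarith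
qed

lemma chain_rank_jump:
  assumes "finite C" "c \<in> C"
  shows "chain_rank C (c - (1, 1)) < chain_rank C c"
proof -
  obtain D where D: "D \<subseteq> C \<inter> {..c - (1, 1)}" "diag_chain D" "card D = chain_rank C (c - (1, 1))"
    using chain_rank_attained[OF assms(1)] .
  have fin: "finite D" using D(1) assms by (auto intro: finite_subset)
  have below: "fst x < fst c \<and> snd x < snd c" if "x \<in> D" for x
  proof -
    have "x \<le> c - (1, 1)" using D(1) that by blast
    then show ?thesis by (simp add: less_eq_prod_def)
  qed
  then have "c \<notin> D" by blast
  have "{..c - (1, 1)} \<subseteq> {..c}" by (simp add: less_eq_prod_def)
  then have "D \<subseteq> C \<inter> {..c}" using D(1) by (meson Int_mono order_refl subset_trans)
  then have "insert c D \<subseteq> C \<inter> {..c}" using assms(2) by simp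
  moreover have "diag_chain (insert c D)" using diag_chain_insert[OF D(2) below] .
  ultimately have "card (insert c D) \<le> chain_rank C c" using chain_rank_ge[OF assms(1)] by blast
  then show ?thesis using fin \<open>c \<notin> D\<close> D(3) by simp
qed

lemma chain_rank_le:
  assumes "finite C" "chains_bounded C u"
  shows "chain_rank C z \<le> u"
proof -
  obtain D where "D \<subseteq> C \<inter> {..z}" "diag_chain D" "card D = chain_rank C z"
    using chain_rank_attained[OF assms(1)] .
  then have "card D \<le> u" using assms(2) unfolding chains_bounded_def by blast
  then show ?thesis using \<open>card D = chain_rank C z\<close> by simp
qed

lemma chain_rank_le_fst:
  assumes "finite C" "C \<subseteq> {1..} \<times> UNIV"
  shows "int (chain_rank C z) \<le> max 0 (fst z)"
proof -
  obtain D where D: "D \<subseteq> C \<inter> {..z}" "diag_chain D" "card D = chain_rank C z"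
    using chain_rank_attained[OF assms(1)] .
  have "fst x \<in> {1..fst z}" if "x \<in> D" for x
  proof -
    have "x \<in> {1..} \<times> UNIV" "x \<le> z" using that D(1) assms(2) by blast+
    then show ?thesis by (auto simp: less_eq_prod_def)
  qed
  then have "int (card D) \<le> max 0 (fst z)" using D(2) by (intro diag_chain_card_le_fst) auto
  then show ?thesis using D(3) by simp
qed

lemma chain_rank_le_snd:
  assumes "finite C" "C \<subseteq> UNIV \<times> {1..}"
  shows "int (chain_rank C z) \<le> max 0 (snd z)"
proof -
  obtain D where D: "D \<subseteq> C \<inter> {..z}" "diag_chain D" "card D = chain_rank C z"
    using chain_rank_attained[OF assms(1)] .
  have "snd x \<in> {1..snd z}" if "x \<in> D" for x
  proof -
    have "x \<in> UNIV \<times> {1..}" "x \<le> z" using that D(1) assms(2) by blast+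
    then show ?thesis by (auto simp: less_eq_prod_def)
  qed
  then have "int (card D) \<le> max 0 (snd z)" using D(2) by (intro diag_chain_card_le_snd) auto
  then show ?thesis using D(3) by simp
qed

lemma chain_rank_in_grid:
  assumes "C \<subseteq> {1..int a} \<times> {1..int b}"
  shows "finite C"
    and "int (chain_rank C z) \<le> max 0 (fst z)"
    and "int (chain_rank C z) \<le> max 0 (snd z)"
    and "c \<in> C \<Longrightarrow> 1 \<le> chain_rank C c"
proof -
  show fin: "finite C" using assms by (rule finite_subset) simp
  show "int (chain_rank C z) \<le> max 0 (fst z)" using assms by (intro chain_rank_le_fst[OF fin]) force
  show "int (chain_rank C z) \<le> max 0 (snd z)" using assms by (intro chain_rank_le_snd[OF fin]) force
  show "1 \<le> chain_rank C c" if "c \<in> C" using chain_rank_jump[OF fin that] by simp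
qed

section \<open>Families of paths from a rank function\<close>

definition nw_frontier :: "(int \<times> int) set \<Rightarrow> (int \<times> int) set" where
  "nw_frontier S = {z \<in> S. z - (1, 1) \<notin> S}"

lemma nw_frontier_step:
  assumes up: "\<And>z w. z \<in> S \<Longrightarrow> z \<le> w \<Longrightarrow> w \<in> S"
    and s: "s \<in> nw_frontier S" and t: "t \<in> nw_frontier S" "s \<noteq> t" "fst t \<le> fst s" "snd s \<le> snd t"
  obtains s' where "s' = (fst s - 1, snd s) \<or> s' = (fst s, snd s + 1)" "s' \<in> nw_frontier S"
    "fst t \<le> fst s'" "snd s' \<le> snd t"
    "nw_frontier S \<inter> {(fst t, snd s)..(fst s, snd t)} =
       insert s (nw_frontier S \<inter> {(fst t, snd s')..(fst s', snd t)})"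
proof (cases "(fst s - 1, snd s) \<in> S")
  case True
  define s' where "s' = (fst s - 1, snd s)"
  have "s' - (1, 1) \<le> s - (1, 1)" by (simp add: s'_def less_eq_prod_def)
  then have s': "s' \<in> nw_frontier S"
    using True s up[of "s' - (1, 1)" "s - (1, 1)"] unfolding nw_frontier_def s'_def by auto
  \<comment> \<open>a frontier point east of \<open>s\<close> in its row would have its diagonal neighbour south-east of \<open>s'\<close>\<close>
  have north: "fst z < fst s"
    if "z \<in> nw_frontier S" "fst z \<le> fst s" "snd s \<le> snd z" "z \<noteq> s" for z
  proof (rule ccontr)
    assume "\<not> fst z < fst s"
    then have "s' \<le> z - (1, 1)" using that(2-4) by (auto simp: s'_def less_eq_prod_def prod_eq_iff)
    then show False using up[of s' "z - (1, 1)"] True that(1) unfolding nw_frontier_def s'_def by auto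
  qed
  show thesis
  proof (rule that[of s'])
    show "fst t \<le> fst s'" using north[of t] t by (simp add: s'_def)
    show "nw_frontier S \<inter> {(fst t, snd s)..(fst s, snd t)} =
       insert s (nw_frontier S \<inter> {(fst t, snd s')..(fst s', snd t)})"
      using north s t(3,4) by (auto simp: s'_def less_eq_prod_def)
  qed (use s' in \<open>auto simp: s'_def t\<close>)
next
  case False
  define s' where "s' = (fst s, snd s + 1)"
  have "s \<le> s'" by (simp add: s'_def less_eq_prod_def)
  then have s': "s' \<in> nw_frontier S"
    using False s up[of s s'] unfolding nw_frontier_def s'_def by auto
  \<comment> \<open>a frontier point north of \<open>s\<close> in its column would force \<open>(fst s - 1, snd s) \<in> S\<close>\<close>
  have east: "snd s + 1 \<le> snd z"
    if "z \<in> nw_frontier S" "fst z \<le> fst s" "snd s \<le> snd z" "z \<noteq> s" for z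
  proof (rule ccontr)
    assume "\<not> snd s + 1 \<le> snd z"
    then have "z \<le> (fst s - 1, snd s)" using that(2-4) by (auto simp: less_eq_prod_def prod_eq_iff)
    then show False using up[of z "(fst s - 1, snd s)"] False that(1) unfolding nw_frontier_def by auto
  qed
  show thesis
  proof (rule that[of s'])
    show "snd s' \<le> snd t" using east[of t] t by (simp add: s'_def)
    show "nw_frontier S \<inter> {(fst t, snd s)..(fst s, snd t)} =
       insert s (nw_frontier S \<inter> {(fst t, snd s')..(fst s', snd t)})"
      using east s t(3,4) by (auto simp: s'_def less_eq_prod_def)
  qed (use s' in \<open>auto simp: s'_def t\<close>)
qed

lemma nw_frontier_path:
  assumes up: "\<And>z w. z \<in> S \<Longrightarrow> z \<le> w \<Longrightarrow> w \<in> S"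
  shows "s \<in> nw_frontier S \<Longrightarrow> t \<in> nw_frontier S \<Longrightarrow> fst t \<le> fst s \<Longrightarrow> snd s \<le> snd t \<Longrightarrow>
    \<exists>P. path_from_to P s t \<and> set P = nw_frontier S \<inter> {(fst t, snd s)..(fst s, snd t)}"
proof (induction "nat (fst s - fst t + (snd t - snd s))" arbitrary: s rule: less_induct)
  case less
  show ?case
  proof (cases "s = t")
    case True
    have "path_from_to [s] s t" using True by (simp add: path_from_to_def lpath_def)
    moreover have "nw_frontier S \<inter> {(fst t, snd s)..(fst s, snd t)} = {s}"
      using True less.prems(1) by (auto simp: less_eq_prod_def prod_eq_iff)
    ultimately show ?thesis by (intro exI[of _ "[s]"]) simp
  next
    case False
    obtain s' where s': "s' = (fst s - 1, snd s) \<or> s' = (fst s, snd s + 1)" "s' \<in> nw_frontier S"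
      "fst t \<le> fst s'" "snd s' \<le> snd t"
      "nw_frontier S \<inter> {(fst t, snd s)..(fst s, snd t)} =
         insert s (nw_frontier S \<inter> {(fst t, snd s')..(fst s', snd t)})"
      by (rule nw_frontier_step[OF up less.prems(1,2) False less.prems(3,4)])
    have "nat (fst s' - fst t + (snd t - snd s')) < nat (fst s - fst t + (snd t - snd s))"
      using s'(1,3,4) by auto
    then obtain P where P: "path_from_to P s' t"
      "set P = nw_frontier S \<inter> {(fst t, snd s')..(fst s', snd t)}"
      using less.hyps s'(2-4) less.prems(2) by blast
    then have "P \<noteq> []" by (simp add: path_from_to_def lpath_def)
    then have "path_from_to (s # P) s t"
      using P(1) s'(1) lpath_Cons[of P s] unfolding path_from_to_def by auto
    then show ?thesis using P(2) s'(5) by (intro exI[of _ "s # P"]) simp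
  qed
qed

lemma good_family_from_rank:
  fixes L :: "int \<times> int \<Rightarrow> int"
  assumes mono: "\<And>z w. z \<le> w \<Longrightarrow> L z \<le> L w"
    and diag: "\<And>z. L z \<le> L (z - (1, 1)) + 1"
    and jump: "\<And>c. c \<in> C \<Longrightarrow> L (c - (1, 1)) < L c"
    and sources: "\<And>p. p \<in> {1..u} \<Longrightarrow> int p \<le> L (X p) \<and> L (X p - (1, 1)) < int p"
    and targets: "\<And>p. p \<in> {1..u} \<Longrightarrow> int p \<le> L (Y p) \<and> L (Y p - (1, 1)) < int p"
    and corners: "\<And>p. p \<in> {1..u} \<Longrightarrow> fst (Y p) \<le> fst (X p) \<and> snd (X p) \<le> snd (Y p)"
    and cover: "\<And>c. c \<in> C \<Longrightarrow>
      \<exists>p\<in>{1..u}. L c = int p \<and> c \<in> {(fst (Y p), snd (X p))..(fst (X p), snd (Y p))}"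
  shows "\<exists>H. good_family u X Y C H"
proof -
  define F where "F p = nw_frontier {z. int p \<le> L z}" for p :: nat
  have F_iff: "z \<in> F p \<longleftrightarrow> int p \<le> L z \<and> L (z - (1, 1)) < int p" for z p
    by (auto simp: F_def nw_frontier_def)
  have "\<forall>p\<in>{1..u}. \<exists>P. path_from_to P (X p) (Y p) \<and>
      set P = F p \<inter> {(fst (Y p), snd (X p))..(fst (X p), snd (Y p))}"
  proof
    fix p assume p: "p \<in> {1..u}"
    have "\<And>z w. z \<in> {z. int p \<le> L z} \<Longrightarrow> z \<le> w \<Longrightarrow> w \<in> {z. int p \<le> L z}"
      using mono by (metis mem_Collect_eq order_trans)
    from nw_frontier_path[OF this]
    show "\<exists>P. path_from_to P (X p) (Y p) \<and>
      set P = F p \<inter> {(fst (Y p), snd (X p))..(fst (X p), snd (Y p))}"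
      using sources[OF p] targets[OF p] corners[OF p] unfolding F_def nw_frontier_def by auto
  qed
  then obtain H where H: "\<forall>p\<in>{1..u}. path_from_to (H p) (X p) (Y p) \<and>
      set (H p) = F p \<inter> {(fst (Y p), snd (X p))..(fst (X p), snd (Y p))}"
    by metis
  \<comment> \<open>as \<open>L\<close> grows by at most one along a diagonal step, a point is on at most one frontier\<close>
  have F_disjoint: "F p \<inter> F q = {}" if "p \<noteq> q" for p q
  proof -
    have "int p = int q" if "z \<in> F p" "z \<in> F q" for z
      using that diag[of z] unfolding F_iff by linarith
    then show ?thesis using \<open>p \<noteq> q\<close> by auto
  qed
  have "good_family u X Y C H"
    unfolding good_family_def
  proof (intro conjI ballI impI)
    fix p q assume "p \<in> {1..u}" "q \<in> {1..u}" "p \<noteq> q"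
    then show "set (H p) \<inter> set (H q) = {}" using H F_disjoint[of p q] by blast
  next
    show "C \<subseteq> (\<Union>p\<in>{1..u}. set (H p))"
    proof
      fix c assume c: "c \<in> C"
      then obtain p where p: "p \<in> {1..u}" "L c = int p"
        "c \<in> {(fst (Y p), snd (X p))..(fst (X p), snd (Y p))}"
        using cover by blast
      then have "c \<in> F p" using jump[OF c] by (simp add: F_iff)
      then show "c \<in> (\<Union>p\<in>{1..u}. set (H p))" using H p by blast
    qed
  qed (use H in blast)
  then show ?thesis by blast
qed

lemma good_family_from_chain_rank:
  fixes f L :: "int \<times> int \<Rightarrow> int"
  assumes fin: "finite C"
    and f_mono: "\<And>z w. z \<le> w \<Longrightarrow> f z \<le> f w"
    and f_diag: "\<And>z. f (z - (1, 1)) = f z - 1"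
    and L: "L = (\<lambda>z. max (int (chain_rank C z)) (f z))"
    and "\<And>p. p \<in> {1..u} \<Longrightarrow> int p \<le> L (X p) \<and> L (X p - (1, 1)) < int p"
    and "\<And>p. p \<in> {1..u} \<Longrightarrow> int p \<le> L (Y p) \<and> L (Y p - (1, 1)) < int p"
    and "\<And>p. p \<in> {1..u} \<Longrightarrow> fst (Y p) \<le> fst (X p) \<and> snd (X p) \<le> snd (Y p)"
    and "\<And>c. c \<in> C \<Longrightarrow>
      \<exists>p\<in>{1..u}. L c = int p \<and> c \<in> {(fst (Y p), snd (X p))..(fst (X p), snd (Y p))}"
  shows "\<exists>H. good_family u X Y C H"
proof (rule good_family_from_rank[of L])
  show "L z \<le> L w" if "z \<le> w" for z w
    using chain_rank_mono[OF fin that] f_mono[OF that] unfolding L by (intro max.mono) simp_all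
  show "L z \<le> L (z - (1, 1)) + 1" for z
    using chain_rank_diag_step[OF fin, of z] f_diag[of z] unfolding L by (auto simp: max_def)
  show "L (c - (1, 1)) < L c" if "c \<in> C" for c
    using chain_rank_jump[OF fin that] f_diag[of c] unfolding L by (auto simp: max_def)
qed (use assms(5-) in auto)

section \<open>The hexagon\<close>

lemma hexagon_lattice_point_bounds:
  fixes a b u :: nat
  assumes "rpt c \<in> convex hull {rpt (1, 1), rpt (int a - int u + 1, 1), rpt (int a, int u),
               rpt (int a, int b), rpt (int u, int b), rpt (1, int b - int u + 1)}"
    and "0 < u" "u \<le> a" "u \<le> b"
  shows "1 \<le> fst c \<and> fst c \<le> int a \<and> 1 \<le> snd c \<and> snd c \<le> int b \<and>
    fst c - snd c \<le> int a - int u \<and> snd c - fst c \<le> int b - int u"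
proof -
  define K where "K = {x. inner (-1, 0) x \<le> -1} \<inter> {x. inner (1, 0) x \<le> real a} \<inter>
    {x. inner (0, -1) x \<le> -1} \<inter> {x. inner (0, 1) x \<le> real b} \<inter>
    {x. inner (1, -1) x \<le> real a - real u} \<inter> {x :: real \<times> real. inner (-1, 1) x \<le> real b - real u}"
  have "convex K" unfolding K_def by (intro convex_Int convex_halfspace_le)
  moreover have "{rpt (1, 1), rpt (int a - int u + 1, 1), rpt (int a, int u),
      rpt (int a, int b), rpt (int u, int b), rpt (1, int b - int u + 1)} \<subseteq> K"
    using assms(2-4) by (auto simp: K_def rpt_def)
  ultimately have "rpt c \<in> K" using assms(1) by (metis hull_minimal subsetD)
  then have "1 \<le> real_of_int (fst c)" "real_of_int (fst c) \<le> real_of_int (int a)"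
    "1 \<le> real_of_int (snd c)" "real_of_int (snd c) \<le> real_of_int (int b)"
    "real_of_int (fst c - snd c) \<le> real_of_int (int a - int u)"
    "real_of_int (snd c - fst c) \<le> real_of_int (int b - int u)"
    by (auto simp: K_def rpt_def)
  then show ?thesis by linarith
qed

lemma hexagon_family_exists:
  fixes a b u :: nat
  assumes "u \<le> a" "u \<le> b" "chains_bounded C u"
    and C: "\<And>c. c \<in> C \<Longrightarrow> 1 \<le> fst c \<and> fst c \<le> int a \<and> 1 \<le> snd c \<and> snd c \<le> int b \<and>
      fst c - snd c \<le> int a - int u \<and> snd c - fst c \<le> int b - int u"
  shows "\<exists>H. good_family u (\<lambda>p. (int a - int u + int p, int p)) (\<lambda>p. (int p, int b - int u + int p)) C H"
proof -
  have "C \<subseteq> {1..int a} \<times> {1..int b}" using C by force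
  note rank = chain_rank_in_grid[OF this]
  \<comment> \<open>the level function of the family whose paths run east, then north\<close>
  define f where "f z = max (fst z - (int a - int u)) (snd z - (int b - int u))" for z :: "int \<times> int"
  define L where "L = (\<lambda>z. max (int (chain_rank C z)) (f z))"
  show ?thesis
  proof (rule good_family_from_chain_rank[OF rank(1) _ _ L_def])
    show "f z \<le> f w" if "z \<le> w" for z w using that by (auto simp: f_def less_eq_prod_def)
    show "f (z - (1, 1)) = f z - 1" for z by (simp add: f_def)
  next
    fix p assume "p \<in> {1..u}"
    then show "int p \<le> L (int a - int u + int p, int p) \<and>
        L ((int a - int u + int p, int p) - (1, 1)) < int p"
      using rank(3)[of "(int a - int u + int p - 1, int p - 1)"] assms(2) by (auto simp: L_def f_def)
  next
    fix p assume "p \<in> {1..u}"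
    then show "int p \<le> L (int p, int b - int u + int p) \<and>
        L ((int p, int b - int u + int p) - (1, 1)) < int p"
      using rank(2)[of "(int p - 1, int b - int u + int p - 1)"] assms(1) by (auto simp: L_def f_def)
  next
    fix c assume c: "c \<in> C"
    have "1 \<le> L c" "L c \<le> int u" "L c \<le> fst c" "L c \<le> snd c"
      "fst c \<le> int a - int u + L c" "snd c \<le> int b - int u + L c"
      using rank(4)[OF c] chain_rank_le[OF rank(1) assms(3), of c] rank(2)[of c] rank(3)[of c]
        C[OF c] assms(1,2)
      unfolding L_def f_def by auto
    then show "\<exists>p\<in>{1..u}. L c = int p \<and>
      c \<in> {(fst (int p, int b - int u + int p), snd (int a - int u + int p, int p))..
           (fst (int a - int u + int p, int p), snd (int p, int b - int u + int p))}"
      by (intro bexI[of _ "nat (L c)"]) (auto simp: less_eq_prod_def)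
  qed (use assms in auto)
qed

lemma hexagon_family_iff:
  fixes a b u :: nat
  assumes "0 < u" "u \<le> min a b"
    and "rpt ` C \<subseteq> convex hull {rpt (1, 1), rpt (int a - int u + 1, 1), rpt (int a, int u),
               rpt (int a, int b), rpt (int u, int b), rpt (1, int b - int u + 1)}"
  shows "(\<exists>H. good_family u (\<lambda>p. (int a - int u + int p, int p)) (\<lambda>p. (int p, int b - int u + int p)) C H)
    \<longleftrightarrow> chains_bounded C u"
proof
  assume "\<exists>H. good_family u (\<lambda>p. (int a - int u + int p, int p))
      (\<lambda>p. (int p, int b - int u + int p)) C H"
  then show "chains_bounded C u" using good_family_chains_bounded by blast
next
  assume bounded: "chains_bounded C u"
  have ua: "u \<le> a" and ub: "u \<le> b" using assms(2) by simp_all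
  have "1 \<le> fst c \<and> fst c \<le> int a \<and> 1 \<le> snd c \<and> snd c \<le> int b \<and>
      fst c - snd c \<le> int a - int u \<and> snd c - fst c \<le> int b - int u" if "c \<in> C" for c
  proof -
    have "rpt c \<in> convex hull {rpt (1, 1), rpt (int a - int u + 1, 1), rpt (int a, int u),
        rpt (int a, int b), rpt (int u, int b), rpt (1, int b - int u + 1)}"
      using assms(3) that by blast
    then show ?thesis by (rule hexagon_lattice_point_bounds[OF _ assms(1) ua ub])
  qed
  then show "\<exists>H. good_family u (\<lambda>p. (int a - int u + int p, int p))
      (\<lambda>p. (int p, int b - int u + int p)) C H"
    by (rule hexagon_family_exists[OF ua ub bounded])
qed

section \<open>Families from the west to the east side\<close>

lemma west_east_family_exists:
  fixes a b u :: nat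
  assumes "0 < b" "u \<le> a" "u \<le> b \<or> u = a" "chains_bounded C u" "C \<subseteq> {1..int a} \<times> {1..int b}"
  shows "\<exists>H. good_family u (\<lambda>p. (int a - int u + int p, 1)) (\<lambda>p. (int p, int b)) C H"
proof -
  note rank = chain_rank_in_grid[OF assms(5)]
  \<comment> \<open>the level function of the family whose paths run east, north, then east again\<close>
  define f where "f z = max (fst z - (int a - int u)) (min (fst z) (snd z - (int b - int u)))"
    for z :: "int \<times> int"
  define L where "L = (\<lambda>z. max (int (chain_rank C z)) (f z))"
  show ?thesis
  proof (rule good_family_from_chain_rank[OF rank(1) _ _ L_def])
    show "f z \<le> f w" if "z \<le> w" for z w using that by (auto simp: f_def less_eq_prod_def)
    show "f (z - (1, 1)) = f z - 1" for z by (simp add: f_def)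
  next
    fix p assume "p \<in> {1..u}"
    then show "int p \<le> L (int a - int u + int p, 1) \<and> L ((int a - int u + int p, 1) - (1, 1)) < int p"
      using rank(3)[of "(int a - int u + int p - 1, 0)"] assms(3) by (auto simp: L_def f_def)
  next
    fix p assume "p \<in> {1..u}"
    then show "int p \<le> L (int p, int b) \<and> L ((int p, int b) - (1, 1)) < int p"
      using rank(2)[of "(int p - 1, int b - 1)"] assms(2) by (auto simp: L_def f_def)
  next
    fix c assume c: "c \<in> C"
    have "1 \<le> fst c" "fst c \<le> int a" "1 \<le> snd c" "snd c \<le> int b" using c assms(5) by auto
    then have "1 \<le> L c" "L c \<le> int u" "L c \<le> fst c" "fst c \<le> int a - int u + L c"
      using rank(4)[OF c] chain_rank_le[OF rank(1) assms(4), of c] rank(2)[of c] assms(2)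
      unfolding L_def f_def by auto
    then show "\<exists>p\<in>{1..u}. L c = int p \<and>
      c \<in> {(fst (int p, int b), snd (int a - int u + int p, 1 :: int))..
           (fst (int a - int u + int p, 1 :: int), snd (int p, int b))}"
      using \<open>1 \<le> snd c\<close> \<open>snd c \<le> int b\<close>
      by (intro bexI[of _ "nat (L c)"]) (auto simp: less_eq_prod_def)
  qed (use assms(1,2) in auto)
qed

text \<open>The first points of consecutive paths stay vertical neighbours, so a north step would run
  into the path above; hence the \<open>p\<close>-th path begins with \<open>p - 1\<close> east steps.\<close>

lemma west_east_family_initial_east_steps:
  fixes a b u :: nat
  assumes gf: "good_family u (\<lambda>p. (int a - int u + int p, 1)) (\<lambda>p. (int p, int b)) C H"
  shows "p \<in> {1..u} \<Longrightarrow> k < p \<Longrightarrow> k < length (H p) \<Longrightarrow> H p ! k = (int a - int u + int p, 1 + int k)"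
proof (induction k arbitrary: p)
  case 0
  then have "path_from_to (H p) (int a - int u + int p, 1) (int p, int b)"
    using gf by (simp add: good_family_def)
  then show ?case using 0 by (simp add: path_from_to_def hd_conv_nth)
next
  case (Suc k)
  have path: "path_from_to (H q) (int a - int u + int q, 1) (int q, int b)" if "q \<in> {1..u}" for q
    using gf that by (simp add: good_family_def)
  have len: "length (H q) = length (H p)" if "q \<in> {1..u}" for q
    using lpath_length[of "H q"] lpath_length[of "H p"] path[OF that] path[OF Suc.prems(1)]
    by (simp add: path_from_to_def)
  have above: "p - 1 \<in> {1..u}" "p - 1 \<noteq> p" using Suc.prems by auto
  have here: "H p ! k = (int a - int u + int p, 1 + int k)"
    using Suc.IH[of p] Suc.prems by simp
  have k_above: "k < length (H (p - 1))" using Suc.prems(3) len[OF above(1)] by simp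
  have "H (p - 1) ! k = (int a - int u + int p - 1, 1 + int k)"
    using Suc.IH[OF above(1) _ k_above] Suc.prems(2) by (simp add: of_nat_diff)
  moreover have "H (p - 1) ! k \<in> set (H (p - 1))" "H p ! Suc k \<in> set (H p)"
    using k_above Suc.prems(3) by simp_all
  moreover have "set (H p) \<inter> set (H (p - 1)) = {}"
    using gf above Suc.prems(1) unfolding good_family_def by blast
  ultimately have "H p ! Suc k \<noteq> (int a - int u + int p - 1, 1 + int k)" by auto
  then show ?case
    using lpath_step[of "H p" k] path[OF Suc.prems(1)] here Suc.prems(3)
    by (auto simp: path_from_to_def)
qed

lemma west_east_family_count_le_width:
  fixes a b u :: nat
  assumes gf: "good_family u (\<lambda>p. (int a - int u + int p, 1)) (\<lambda>p. (int p, int b)) C H"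
    and "0 < u" "u < a"
  shows "u \<le> b"
proof (rule ccontr)
  assume "\<not> u \<le> b"
  have "u \<in> {1..u}" using assms(2) by simp
  then have path: "path_from_to (H u) (int a, 1) (int u, int b)"
    using gf unfolding good_family_def by fastforce
  then have "b < length (H u)" using lpath_length[of "H u"] assms(3) by (simp add: path_from_to_def)
  then have "H u ! b = (int a, 1 + int b)"
    using west_east_family_initial_east_steps[OF gf, of u b] assms(2) \<open>\<not> u \<le> b\<close> by simp
  moreover have "H u ! b \<in> set (H u)" using \<open>b < length (H u)\<close> by simp
  ultimately show False using lpath_set_bounds[of "H u"] path by (force simp: path_from_to_def)
qed

lemma west_east_family_iff:
  fixes a b u :: nat
  assumes "0 < u" "u < a" "C \<subseteq> {1..int a} \<times> {1..int b}"
  shows "(\<exists>H. good_family u (\<lambda>p. (int a - int u + int p, 1)) (\<lambda>p. (int p, int b)) C H)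
    \<longleftrightarrow> u \<le> b \<and> chains_bounded C u"
proof
  assume "\<exists>H. good_family u (\<lambda>p. (int a - int u + int p, 1)) (\<lambda>p. (int p, int b)) C H"
  then obtain H where H: "good_family u (\<lambda>p. (int a - int u + int p, 1)) (\<lambda>p. (int p, int b)) C H" ..
  show "u \<le> b \<and> chains_bounded C u"
    using good_family_chains_bounded[OF H] west_east_family_count_le_width[OF H assms(1,2)] by simp
next
  assume "u \<le> b \<and> chains_bounded C u"
  then show "\<exists>H. good_family u (\<lambda>p. (int a - int u + int p, 1)) (\<lambda>p. (int p, int b)) C H"
    using west_east_family_exists[OF _ _ _ _ assms(3)] assms(1,2) by simp
qed

lemma west_east_full_family_exists:
  fixes a b u :: nat
  assumes "0 < b" "u = a" "C \<subseteq> {1..int a} \<times> {1..int b}"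
  shows "\<exists>H. good_family u (\<lambda>p. (int a - int u + int p, 1)) (\<lambda>p. (int p, int b)) C H"
proof -
  have "chains_bounded C a" using assms(3) by (intro chains_bounded_rows) auto
  then show ?thesis using west_east_family_exists[OF assms(1) _ _ _ assms(3), of u] assms(2) by simp
qed

lemma west_east_full_family:
  fixes a b u :: nat
  assumes "u = a" "good_family u (\<lambda>p. (int a - int u + int p, 1)) (\<lambda>p. (int p, int b)) C H"
    and "p \<in> {1..u}"
  shows "H p = map (\<lambda>k. (int p, 1 + int k)) [0..<b]"
proof -
  have "path_from_to (H p) (int p, 1) (int p, int b)"
    using assms by (simp add: good_family_def)
  then have "H p = map (\<lambda>k. (int p, 1 + int k)) [0..<nat (int b - 1 + 1)]"
    by (rule path_from_to_same_row)
  then show ?thesis by simp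
qed

lemma west_east_families:
  fixes a b u :: nat
  assumes "0 < b" "0 < u"
  defines "WE \<equiv> \<lambda>C. good_family u (\<lambda>p. (int a - int u + int p, 1)) (\<lambda>p. (int p, int b)) C"
  shows "\<forall>C. C \<subseteq> {1..int a} \<times> {1..int b} \<longrightarrow>
      (u < a \<longrightarrow> ((\<exists>H. WE C H) \<longleftrightarrow> u \<le> b \<and> chains_bounded C u)) \<and>
      (u = a \<longrightarrow> (\<exists>H. WE C H) \<and> (\<forall>H H'. WE C H \<longrightarrow> WE C H' \<longrightarrow> (\<forall>p\<in>{1..u}. H p = H' p)) \<and>
        (\<forall>H. WE C H \<longrightarrow> (\<forall>p\<in>{1..u}. straight_horizontal (H p))))"
proof (intro allI impI conjI ballI)
  fix C assume "C \<subseteq> {1..int a} \<times> {1..int b}" "u < a"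
  then show "(\<exists>H. WE C H) \<longleftrightarrow> u \<le> b \<and> chains_bounded C u"
    unfolding WE_def using west_east_family_iff[OF assms(2)] by simp
next
  fix C assume "C \<subseteq> {1..int a} \<times> {1..int b}" "u = a"
  then show "\<exists>H. WE C H" unfolding WE_def using west_east_full_family_exists[OF assms(1)] by simp
next
  fix C H H' p assume "u = a" "WE C H" "WE C H'" "p \<in> {1..u}"
  then show "H p = H' p"
    unfolding WE_def using west_east_full_family[of u a b C H p] west_east_full_family[of u a b C H' p]
    by simp
next
  fix C H p assume "u = a" "WE C H" "p \<in> {1..u}"
  then show "straight_horizontal (H p)"
    unfolding WE_def using west_east_full_family[of u a b C H p] by (simp add: straight_horizontal_row)
qed

section \<open>Reflection in the anti-diagonal\<close>

definition antidiag_reflect :: "int \<Rightarrow> int \<Rightarrow> int \<times> int \<Rightarrow> int \<times> int" where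
  "antidiag_reflect m n z = (m - snd z, n - fst z)"

lemma antidiag_reflect_involution [simp]: "antidiag_reflect n m (antidiag_reflect m n z) = z"
  by (simp add: antidiag_reflect_def)

lemma inj_antidiag_reflect: "inj (antidiag_reflect m n)"
  by (metis antidiag_reflect_involution injI)

lemma path_from_to_antidiag_reflect:
  assumes "path_from_to P s t"
  shows "path_from_to (map (antidiag_reflect m n) P) (antidiag_reflect m n s) (antidiag_reflect m n t)"
proof -
  have "P \<noteq> []" using assms by (simp add: path_from_to_def lpath_def)
  moreover have "lpath (map (antidiag_reflect m n) P)"
    using assms unfolding path_from_to_def lpath_def antidiag_reflect_def by auto
  ultimately show ?thesis using assms by (simp add: path_from_to_def hd_map last_map)
qed

lemma chains_bounded_antidiag_reflect:
  assumes "chains_bounded C u"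
  shows "chains_bounded (antidiag_reflect m n ` C) u"
  unfolding chains_bounded_def
proof (intro allI impI)
  fix D assume D: "D \<subseteq> antidiag_reflect m n ` C" "diag_chain D"
  let ?D' = "antidiag_reflect n m ` D"
  have "?D' \<subseteq> C" using D(1) by auto
  moreover have "diag_chain ?D'" using D(2) unfolding diag_chain_def antidiag_reflect_def by auto
  ultimately have "card ?D' \<le> u" using assms unfolding chains_bounded_def by blast
  moreover have "card ?D' = card D"
    by (rule card_image[OF inj_on_subset[OF inj_antidiag_reflect subset_UNIV]])
  ultimately show "card D \<le> u" by simp
qed

lemma chains_bounded_antidiag_reflect_iff:
  "chains_bounded (antidiag_reflect m n ` C) u \<longleftrightarrow> chains_bounded C u"
  using chains_bounded_antidiag_reflect[of "antidiag_reflect m n ` C" u n m]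
    chains_bounded_antidiag_reflect[of C u m n] by (auto simp: image_image)

lemma good_family_cong:
  assumes "\<And>p. p \<in> {1..u} \<Longrightarrow> X p = X' p \<and> Y p = Y' p \<and> H p = H' p"
  shows "good_family u X Y C H \<longleftrightarrow> good_family u X' Y' C H'"
proof -
  have "(\<Union>p\<in>{1..u}. set (H p)) = (\<Union>p\<in>{1..u}. set (H' p))" using assms by simp
  then show ?thesis using assms unfolding good_family_def by simp
qed

text \<open>Reflection in an anti-diagonal preserves paths and diagonal chains but reverses the
  order of nonintersecting paths, hence the reindexing \<open>p \<mapsto> u + 1 - p\<close>.\<close>

lemma good_family_antidiag_reflect:
  assumes "good_family u X Y C H"
  shows "good_family u (\<lambda>p. antidiag_reflect m n (X (u + 1 - p)))
    (\<lambda>p. antidiag_reflect m n (Y (u + 1 - p))) (antidiag_reflect m n ` C)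
    (\<lambda>p. map (antidiag_reflect m n) (H (u + 1 - p)))"
  unfolding good_family_def
proof (intro conjI ballI impI)
  fix p assume "p \<in> {1..u}"
  then have "u + 1 - p \<in> {1..u}" by auto
  then show "path_from_to (map (antidiag_reflect m n) (H (u + 1 - p)))
      (antidiag_reflect m n (X (u + 1 - p))) (antidiag_reflect m n (Y (u + 1 - p)))"
    using assms path_from_to_antidiag_reflect unfolding good_family_def by blast
next
  fix p q assume "p \<in> {1..u}" "q \<in> {1..u}" "p \<noteq> q"
  then have "u + 1 - p \<in> {1..u}" "u + 1 - q \<in> {1..u}" "u + 1 - p \<noteq> u + 1 - q" by auto
  then have "set (H (u + 1 - p)) \<inter> set (H (u + 1 - q)) = {}"
    using assms unfolding good_family_def by blast
  then show "set (map (antidiag_reflect m n) (H (u + 1 - p))) \<inter>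
      set (map (antidiag_reflect m n) (H (u + 1 - q))) = {}"
    by (simp add: image_Int[OF inj_antidiag_reflect, symmetric])
next
  show "antidiag_reflect m n ` C \<subseteq> (\<Union>p\<in>{1..u}. set (map (antidiag_reflect m n) (H (u + 1 - p))))"
  proof
    fix z assume "z \<in> antidiag_reflect m n ` C"
    then obtain c q where "z = antidiag_reflect m n c" "q \<in> {1..u}" "c \<in> set (H q)"
      using assms unfolding good_family_def by blast
    moreover have "u + 1 - q \<in> {1..u}" "u + 1 - (u + 1 - q) = q" using \<open>q \<in> {1..u}\<close> by auto
    ultimately show "z \<in> (\<Union>p\<in>{1..u}. set (map (antidiag_reflect m n) (H (u + 1 - p))))"
      by (metis UN_iff image_eqI set_map)
  qed
qed

lemma south_north_to_west_east:
  fixes a b u :: nat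
  assumes "good_family u (\<lambda>q. (int a, int q)) (\<lambda>q. (1, int b - int u + int q)) C H"
  shows "good_family u (\<lambda>p. (int b - int u + int p, 1)) (\<lambda>p. (int p, int a))
    (antidiag_reflect (int b + 1) (int a + 1) ` C)
    (\<lambda>p. map (antidiag_reflect (int b + 1) (int a + 1)) (H (u + 1 - p)))"
  using good_family_antidiag_reflect[OF assms, of "int b + 1" "int a + 1"]
  by (subst good_family_cong) (auto simp: antidiag_reflect_def of_nat_diff)

lemma west_east_to_south_north:
  fixes a b u :: nat
  assumes "good_family u (\<lambda>p. (int b - int u + int p, 1)) (\<lambda>p. (int p, int a)) C G"
  shows "good_family u (\<lambda>q. (int a, int q)) (\<lambda>q. (1, int b - int u + int q))
    (antidiag_reflect (int a + 1) (int b + 1) ` C)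
    (\<lambda>q. map (antidiag_reflect (int a + 1) (int b + 1)) (G (u + 1 - q)))"
  using good_family_antidiag_reflect[OF assms, of "int a + 1" "int b + 1"]
  by (subst good_family_cong) (auto simp: antidiag_reflect_def of_nat_diff)

lemma south_north_family_iff_west_east:
  fixes a b u :: nat
  shows "(\<exists>H. good_family u (\<lambda>q. (int a, int q)) (\<lambda>q. (1, int b - int u + int q)) C H) \<longleftrightarrow>
    (\<exists>G. good_family u (\<lambda>p. (int b - int u + int p, 1)) (\<lambda>p. (int p, int a))
      (antidiag_reflect (int b + 1) (int a + 1) ` C) G)"
proof
  assume "\<exists>H. good_family u (\<lambda>q. (int a, int q)) (\<lambda>q. (1, int b - int u + int q)) C H"
  then show "\<exists>G. good_family u (\<lambda>p. (int b - int u + int p, 1)) (\<lambda>p. (int p, int a))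
      (antidiag_reflect (int b + 1) (int a + 1) ` C) G"
    using south_north_to_west_east by blast
next
  assume "\<exists>G. good_family u (\<lambda>p. (int b - int u + int p, 1)) (\<lambda>p. (int p, int a))
      (antidiag_reflect (int b + 1) (int a + 1) ` C) G"
  then obtain G where "good_family u (\<lambda>p. (int b - int u + int p, 1)) (\<lambda>p. (int p, int a))
      (antidiag_reflect (int b + 1) (int a + 1) ` C) G" ..
  then have "good_family u (\<lambda>q. (int a, int q)) (\<lambda>q. (1, int b - int u + int q))
      (antidiag_reflect (int a + 1) (int b + 1) ` antidiag_reflect (int b + 1) (int a + 1) ` C)
      (\<lambda>q. map (antidiag_reflect (int a + 1) (int b + 1)) (G (u + 1 - q)))"
    by (rule west_east_to_south_north)
  then show "\<exists>H. good_family u (\<lambda>q. (int a, int q)) (\<lambda>q. (1, int b - int u + int q)) C H"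
    by (auto simp: image_image)
qed

lemma antidiag_reflect_grid:
  fixes a b :: nat
  assumes "C \<subseteq> {1..int a} \<times> {1..int b}"
  shows "antidiag_reflect (int b + 1) (int a + 1) ` C \<subseteq> {1..int b} \<times> {1..int a}"
  using assms by (auto simp: antidiag_reflect_def)

lemma south_north_family_iff:
  fixes a b u :: nat
  assumes "0 < u" "u < b" "C \<subseteq> {1..int a} \<times> {1..int b}"
  shows "(\<exists>H. good_family u (\<lambda>q. (int a, int q)) (\<lambda>q. (1, int b - int u + int q)) C H)
    \<longleftrightarrow> u \<le> a \<and> chains_bounded C u"
  using west_east_family_iff[OF assms(1,2) antidiag_reflect_grid[OF assms(3)]]
  by (simp add: south_north_family_iff_west_east chains_bounded_antidiag_reflect_iff)

lemma south_north_full_family_exists: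
  fixes a b u :: nat
  assumes "0 < a" "u = b" "C \<subseteq> {1..int a} \<times> {1..int b}"
  shows "\<exists>H. good_family u (\<lambda>q. (int a, int q)) (\<lambda>q. (1, int b - int u + int q)) C H"
  using west_east_full_family_exists[OF assms(1,2) antidiag_reflect_grid[OF assms(3)]]
  by (simp add: south_north_family_iff_west_east)

lemma path_from_to_same_column:
  assumes "path_from_to P (r, c) (d, c)"
  shows "P = map (\<lambda>k. (r - int k, c)) [0..<nat (r - d + 1)]"
proof -
  have "path_from_to (map (antidiag_reflect 0 0) P) (- c, - r) (- c, - d)"
    using path_from_to_antidiag_reflect[OF assms, of 0 0] by (simp add: antidiag_reflect_def)
  then have "map (antidiag_reflect 0 0) P = map (\<lambda>k. (- c, - r + int k)) [0..<nat (- d - - r + 1)]"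
    by (rule path_from_to_same_row)
  then have "map (antidiag_reflect 0 0) (map (antidiag_reflect 0 0) P) =
      map (antidiag_reflect 0 0) (map (\<lambda>k. (- c, - r + int k)) [0..<nat (r - d + 1)])"
    by simp
  then show ?thesis by (simp add: antidiag_reflect_def comp_def)
qed

lemma south_north_full_family:
  fixes a b u :: nat
  assumes "u = b" "good_family u (\<lambda>q. (int a, int q)) (\<lambda>q. (1, int b - int u + int q)) C H"
    and "q \<in> {1..u}"
  shows "H q = map (\<lambda>k. (int a - int k, int q)) [0..<a]"
proof -
  have "path_from_to (H q) (int a, int q) (1, int q)"
    using assms by (simp add: good_family_def)
  then have "H q = map (\<lambda>k. (int a - int k, int q)) [0..<nat (int a - 1 + 1)]"
    by (rule path_from_to_same_column)
  then show ?thesis by simp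
qed

lemma south_north_families:
  fixes a b u :: nat
  assumes "0 < a" "0 < u"
  defines "SN \<equiv> \<lambda>C. good_family u (\<lambda>q. (int a, int q)) (\<lambda>q. (1, int b - int u + int q)) C"
  shows "\<forall>C. C \<subseteq> {1..int a} \<times> {1..int b} \<longrightarrow>
      (u < b \<longrightarrow> ((\<exists>H. SN C H) \<longleftrightarrow> u \<le> a \<and> chains_bounded C u)) \<and>
      (u = b \<longrightarrow> (\<exists>H. SN C H) \<and> (\<forall>H H'. SN C H \<longrightarrow> SN C H' \<longrightarrow> (\<forall>q\<in>{1..u}. H q = H' q)) \<and>
        (\<forall>H. SN C H \<longrightarrow> (\<forall>q\<in>{1..u}. straight_vertical (H q))))"
proof (intro allI impI conjI ballI)
  fix C assume "C \<subseteq> {1..int a} \<times> {1..int b}" "u < b"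
  then show "(\<exists>H. SN C H) \<longleftrightarrow> u \<le> a \<and> chains_bounded C u"
    unfolding SN_def using south_north_family_iff[OF assms(2)] by simp
next
  fix C assume "C \<subseteq> {1..int a} \<times> {1..int b}" "u = b"
  then show "\<exists>H. SN C H" unfolding SN_def using south_north_full_family_exists[OF assms(1)] by simp
next
  fix C H H' q assume "u = b" "SN C H" "SN C H'" "q \<in> {1..u}"
  then show "H q = H' q"
    unfolding SN_def using south_north_full_family[of u b a C H q] south_north_full_family[of u b a C H' q]
    by simp
next
  fix C H q assume "u = b" "SN C H" "q \<in> {1..u}"
  then show "straight_vertical (H q)"
    unfolding SN_def using south_north_full_family[of u b a C H q] by (simp add: straight_vertical_column)
qed

theorem lemma2p6:
  fixes a b u :: nat
  assumes "0 < a" and "0 < b" and "0 < u"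
  shows
   "(u \<le> min a b \<longrightarrow>
      (\<forall>C. rpt ` C \<subseteq> convex hull
              {rpt (1, 1), rpt (int a - int u + 1, 1), rpt (int a, int u),
               rpt (int a, int b), rpt (int u, int b), rpt (1, int b - int u + 1)} \<longrightarrow>
         ((\<exists>H. good_family u (\<lambda>p. (int a - int u + int p, int p))
                              (\<lambda>p. (int p, int b - int u + int p)) C H)
          \<longleftrightarrow> chains_bounded C u))) \<and>
   (\<forall>C. C \<subseteq> {1..int a} \<times> {1..int b} \<longrightarrow>
      (u < a \<longrightarrow>
        ((\<exists>H. good_family u (\<lambda>p. (int a - int u + int p, 1)) (\<lambda>p. (int p, int b)) C H)
         \<longleftrightarrow> u \<le> b \<and> chains_bounded C u)) \<and>
      (u = a \<longrightarrow>
        (\<exists>H. good_family u (\<lambda>p. (int a - int u + int p, 1)) (\<lambda>p. (int p, int b)) C H) \<and>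
        (\<forall>H H'. good_family u (\<lambda>p. (int a - int u + int p, 1)) (\<lambda>p. (int p, int b)) C H \<longrightarrow>
                 good_family u (\<lambda>p. (int a - int u + int p, 1)) (\<lambda>p. (int p, int b)) C H' \<longrightarrow>
                 (\<forall>p\<in>{1..u}. H p = H' p)) \<and>
        (\<forall>H. good_family u (\<lambda>p. (int a - int u + int p, 1)) (\<lambda>p. (int p, int b)) C H \<longrightarrow>
              (\<forall>p\<in>{1..u}. straight_horizontal (H p))))) \<and>
   (\<forall>C. C \<subseteq> {1..int a} \<times> {1..int b} \<longrightarrow>
      (u < b \<longrightarrow>
        ((\<exists>H. good_family u (\<lambda>q. (int a, int q)) (\<lambda>q. (1, int b - int u + int q)) C H)
         \<longleftrightarrow> u \<le> a \<and> chains_bounded C u)) \<and>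
      (u = b \<longrightarrow>
        (\<exists>H. good_family u (\<lambda>q. (int a, int q)) (\<lambda>q. (1, int b - int u + int q)) C H) \<and>
        (\<forall>H H'. good_family u (\<lambda>q. (int a, int q)) (\<lambda>q. (1, int b - int u + int q)) C H \<longrightarrow>
                 good_family u (\<lambda>q. (int a, int q)) (\<lambda>q. (1, int b - int u + int q)) C H' \<longrightarrow>
                 (\<forall>q\<in>{1..u}. H q = H' q)) \<and>
        (\<forall>H. good_family u (\<lambda>q. (int a, int q)) (\<lambda>q. (1, int b - int u + int q)) C H \<longrightarrow>
              (\<forall>q\<in>{1..u}. straight_vertical (H q)))))"
  by (intro conjI west_east_families[OF assms(2,3)] south_north_families[OF assms(1,3)]
      impI allI hexagon_family_iff[OF assms(3)])

end
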